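(* Let $X$ be a non-empty compact ultrametric space with a finite similarity structure $\mathrm{Sim}_X$ and let $\Gamma=\Gamma(\mathrm{Sim}_X)$. Under the action of $\Gamma$ on the set of vertices given by $\gamma\{[f_1,B_1],\dots,[f_k,B_k]\}=\{[\gamma f_1,B_1],\dots,[\gamma f_k,B_k]\}$, the stabilizer in $\Gamma$ of every vertex is finite.
   Context: A *ball* in $X$ is a closed metric ball of positive radius. A *finite similarity structure* $\mathrm{Sim}_X$ assigns to each ordered pair of balls $B_1,B_2$ a finite (possibly empty) set $\mathrm{Sim}_X(B_1,B_2)$ of surjective similarities $B_1\to B_2$, closed under identities, inverses, compositions, and restrictions to sub-balls (if $h\in\mathrm{Sim}_X(B_1,B_2)$ and $B_3\subseteq B_1$ is a ball, $h|_{B_3}\in\mathrm{Sim}_X(B_3,h(B_3))$). An embedding $h:B\to X$ ($B$ a ball) is *locally determined by* $\mathrm{Sim}_X$ if every $x\in B$ lies in a ball $B'\subseteq B$ with $h(B')$ a ball and $h|_{B'}\in\mathrm{Sim}_X(B',h(B'))$. $\Gamma(\mathrm{Sim}_X)$ is the group of homeomorphisms $X\to X$ locally determined by $\mathrm{Sim}_X$. Let $\mathcal S$ be the set of pairs $(f,B)$ with $B$ a ball and $f:B\to X$ an embedding locally determined by $\mathrm{Sim}_X$; $(f_1,B_1)\sim(f_2,B_2)$ iff $f_2h=f_1$ for some $h\in\mathrm{Sim}_X(B_1,B_2)$; $[f,B]$ is the class (for $\gamma\in\Gamma$, $[\gamma f,B]$ is a well-defined class). A *vertex* is a finite set $\{[f_1,B_1],\dots,[f_k,B_k]\}$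 of classes with $f_1(B_1),\dots,f_k(B_k)$ pairwise disjoint and with union $X$. *)

theory Defs
  imports "HOL-Analysis.Analysis"
begin

text \<open>The space X is a subset of a metric space type; its metric is the restriction of dist.\<close>

definition ultrametric :: "'a::metric_space set \<Rightarrow> bool" where
  "ultrametric X \<longleftrightarrow> (\<forall>x\<in>X. \<forall>y\<in>X. \<forall>z\<in>X. dist x z \<le> max (dist x y) (dist y z))"

definition is_ball :: "'a::metric_space set \<Rightarrow> 'a set \<Rightarrow> bool" where
  "is_ball X B \<longleftrightarrow> (\<exists>x\<in>X. \<exists>r>0. B = X \<inter> cball x r)"

definition similarity :: "'a::metric_space set \<Rightarrow> 'a set \<Rightarrow> ('a \<Rightarrow> 'a) \<Rightarrow> bool" where
  "similarity B1 B2 h \<longleftrightarrow> h ` B1 = B2 \<and>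
     (\<exists>c>0. \<forall>x\<in>B1. \<forall>y\<in>B1. dist (h x) (h y) = c * dist x y)"

text \<open>Maps in Sim(B1,B2) are represented extensionally (undefined outside B1),
  so that a map B1 -> B2 corresponds to exactly one HOL function.\<close>
definition finite_sim_structure ::
  "'a::metric_space set \<Rightarrow> ('a set \<Rightarrow> 'a set \<Rightarrow> ('a \<Rightarrow> 'a) set) \<Rightarrow> bool" where
  "finite_sim_structure X Sim \<longleftrightarrow>
     (\<forall>B1 B2. is_ball X B1 \<longrightarrow> is_ball X B2 \<longrightarrow>
        finite (Sim B1 B2) \<and> Sim B1 B2 \<subseteq> extensional B1 \<and>
        (\<forall>h\<in>Sim B1 B2. similarity B1 B2 h)) \<and>
     (\<forall>B. is_ball X B \<longrightarrow> restrict id B \<in> Sim B B) \<and>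
     (\<forall>B1 B2. is_ball X B1 \<longrightarrow> is_ball X B2 \<longrightarrow>
        (\<forall>h\<in>Sim B1 B2. restrict (inv_into B1 h) B2 \<in> Sim B2 B1)) \<and>
     (\<forall>B1 B2 B3. is_ball X B1 \<longrightarrow> is_ball X B2 \<longrightarrow> is_ball X B3 \<longrightarrow>
        (\<forall>h\<in>Sim B1 B2. \<forall>g\<in>Sim B2 B3. restrict (g \<circ> h) B1 \<in> Sim B1 B3)) \<and>
     (\<forall>B1 B2 B3. is_ball X B1 \<longrightarrow> is_ball X B2 \<longrightarrow> is_ball X B3 \<longrightarrow> B3 \<subseteq> B1 \<longrightarrow>
        (\<forall>h\<in>Sim B1 B2. is_ball X (h ` B3) \<and> restrict h B3 \<in> Sim B3 (h ` B3)))"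

definition embedding_into :: "'a::metric_space set \<Rightarrow> 'a set \<Rightarrow> ('a \<Rightarrow> 'a) \<Rightarrow> bool" where
  "embedding_into X B h \<longleftrightarrow> h ` B \<subseteq> X \<and> (\<exists>g. homeomorphism B (h ` B) h g)"

definition locally_determined ::
  "'a::metric_space set \<Rightarrow> ('a set \<Rightarrow> 'a set \<Rightarrow> ('a \<Rightarrow> 'a) set) \<Rightarrow> 'a set \<Rightarrow> ('a \<Rightarrow> 'a) \<Rightarrow> bool" where
  "locally_determined X Sim B h \<longleftrightarrow>
     (\<forall>x\<in>B. \<exists>B'. is_ball X B' \<and> x \<in> B' \<and> B' \<subseteq> B \<and> is_ball X (h ` B') \<and>
        restrict h B' \<in> Sim B' (h ` B'))"

definition GammaSim :: "'a::metric_space set \<Rightarrow> ('a set \<Rightarrow> 'a set \<Rightarrow> ('a \<Rightarrow> 'a) set) \<Rightarrow> ('a \<Rightarrow> 'a) set" where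
  "GammaSim X Sim = {\<gamma>. \<gamma> \<in> extensional X \<and> (\<exists>g. homeomorphism X X \<gamma> g) \<and>
                      locally_determined X Sim X \<gamma>}"

definition Spairs :: "'a::metric_space set \<Rightarrow> ('a set \<Rightarrow> 'a set \<Rightarrow> ('a \<Rightarrow> 'a) set) \<Rightarrow> (('a \<Rightarrow> 'a) \<times> 'a set) set" where
  "Spairs X Sim = {(f, B). is_ball X B \<and> embedding_into X B f \<and> locally_determined X Sim B f}"

definition pair_rel ::
  "('a set \<Rightarrow> 'a set \<Rightarrow> ('a \<Rightarrow> 'a) set) \<Rightarrow> ('a \<Rightarrow> 'a) \<times> 'a set \<Rightarrow> ('a \<Rightarrow> 'a) \<times> 'a set \<Rightarrow> bool" where
  "pair_rel Sim p q \<longleftrightarrow> (\<exists>h\<in>Sim (snd p) (snd q). \<forall>x\<in>snd p. fst q (h x) = fst p x)"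

definition cls :: "'a::metric_space set \<Rightarrow> ('a set \<Rightarrow> 'a set \<Rightarrow> ('a \<Rightarrow> 'a) set) \<Rightarrow> ('a \<Rightarrow> 'a) \<Rightarrow> 'a set \<Rightarrow> (('a \<Rightarrow> 'a) \<times> 'a set) set" where
  "cls X Sim f B = {q \<in> Spairs X Sim. pair_rel Sim (f, B) q}"

definition is_vertex :: "'a::metric_space set \<Rightarrow> ('a set \<Rightarrow> 'a set \<Rightarrow> ('a \<Rightarrow> 'a) set) \<Rightarrow> (('a \<Rightarrow> 'a) \<times> 'a set) set set \<Rightarrow> bool" where
  "is_vertex X Sim V \<longleftrightarrow>
     (\<exists>k::nat. \<exists>fs Bs. (\<forall>i<k. (fs i, Bs i) \<in> Spairs X Sim) \<and>
        V = {cls X Sim (fs i) (Bs i) | i. i < k} \<and>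
        (\<forall>i<k. \<forall>j<k. i \<noteq> j \<longrightarrow> fs i ` Bs i \<inter> fs j ` Bs j = {}) \<and>
        (\<Union>i<k. fs i ` Bs i) = X)"

text \<open>Action of gamma on a vertex: replace each class [f,B] by [gamma o f, B]
  (well defined; here taken over all representatives).\<close>
definition vertex_act :: "'a::metric_space set \<Rightarrow> ('a set \<Rightarrow> 'a set \<Rightarrow> ('a \<Rightarrow> 'a) set) \<Rightarrow> ('a \<Rightarrow> 'a) \<Rightarrow> (('a \<Rightarrow> 'a) \<times> 'a set) set set \<Rightarrow> (('a \<Rightarrow> 'a) \<times> 'a set) set set" where
  "vertex_act X Sim \<gamma> V = {cls X Sim (\<gamma> \<circ> f) B | f B. \<exists>c\<in>V. (f, B) \<in> c}"

end

theory Submission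
  imports Defs
begin

(* Write a vertex as V = {[f_1,B_1], ..., [f_k,B_k]}, where the pieces f_i(B_i)
   cover X.  If gamma fixes V, then for each i the class [gamma f_i, B_i] is
   again some [f_j, B_j], i.e. gamma f_i = f_j h on B_i for some j and some
   h in Sim(B_i,B_j).  So on the piece f_i(B_i) the map gamma is determined by
   the pair (j,h), which ranges over a finite set.  As the pieces cover X and
   elements of Gamma are extensional on X, gamma is determined by a choice of
   one such pair per piece, and there are only finitely many such choices. *)

lemma finite_piecewise_determined:
  fixes G :: "('a \<Rightarrow> 'b) set" and A :: "'i \<Rightarrow> 'a set" and S :: "'i \<Rightarrow> 'p set"
  assumes ext: "G \<subseteq> extensional X"
    and finite_I: "finite I"
    and cover: "X = (\<Union>i\<in>I. A i)"
    and finite_S: "\<And>i. i \<in> I \<Longrightarrow> finite (S i)"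
    and choice: "\<And>\<gamma> i. \<gamma> \<in> G \<Longrightarrow> i \<in> I \<Longrightarrow> \<exists>p\<in>S i. Q \<gamma> i p"
    and determines: "\<And>\<gamma> \<gamma>' i p y. \<gamma> \<in> G \<Longrightarrow> \<gamma>' \<in> G \<Longrightarrow> i \<in> I \<Longrightarrow>
                        Q \<gamma> i p \<Longrightarrow> Q \<gamma>' i p \<Longrightarrow> y \<in> A i \<Longrightarrow> \<gamma> y = \<gamma>' y"
  shows "finite G"
proof -
  define code where "code \<gamma> = (\<lambda>i\<in>I. SOME p. p \<in> S i \<and> Q \<gamma> i p)" for \<gamma>
  have code_spec: "code \<gamma> i \<in> S i \<and> Q \<gamma> i (code \<gamma> i)" if "\<gamma> \<in> G" "i \<in> I" for \<gamma> i
    using someI_ex[of "\<lambda>p. p \<in> S i \<and> Q \<gamma> i p"] choice[OF that] that(2)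
    unfolding code_def by auto
  have "code ` G \<subseteq> PiE I S"
  proof
    fix c assume "c \<in> code ` G"
    then obtain \<gamma> where \<gamma>: "\<gamma> \<in> G" and c: "c = code \<gamma>" by blast
    have "c \<in> extensional I" unfolding c code_def by (rule restrict_extensional)
    then show "c \<in> PiE I S" using code_spec[OF \<gamma>] unfolding c by (simp add: PiE_iff)
  qed
  moreover have "inj_on code G"
  proof (rule inj_onI)
    fix \<gamma> \<gamma>' assume \<gamma>: "\<gamma> \<in> G" and \<gamma>': "\<gamma>' \<in> G" and same: "code \<gamma> = code \<gamma>'"
    show "\<gamma> = \<gamma>'"
    proof
      fix y
      show "\<gamma> y = \<gamma>' y"
      proof (cases "y \<in> X")
        case True
        then obtain i where i: "i \<in> I" and y: "y \<in> A i" using cover by blast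
        have "Q \<gamma> i (code \<gamma> i)" "Q \<gamma>' i (code \<gamma> i)"
          using code_spec[OF \<gamma> i] code_spec[OF \<gamma>' i] same by simp_all
        then show ?thesis using determines[OF \<gamma> \<gamma>' i _ _ y] by blast
      next
        case False
        have "\<gamma> \<in> extensional X" "\<gamma>' \<in> extensional X" using \<gamma> \<gamma>' ext by auto
        then show ?thesis using extensional_arb[OF _ False] by metis
      qed
    qed
  qed
  moreover have "finite (PiE I S)" using finite_I finite_S by (rule finite_PiE)
  ultimately show ?thesis by (intro inj_on_finite[of code G "PiE I S"])
qed

lemma finite_Sim:
  assumes "finite_sim_structure X Sim" "is_ball X B1" "is_ball X B2"
  shows "finite (Sim B1 B2)"
proof -
  have "\<forall>B1 B2. is_ball X B1 \<longrightarrow> is_ball X B2 \<longrightarrow> finite (Sim B1 B2) \<and>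
          Sim B1 B2 \<subseteq> extensional B1 \<and> (\<forall>h\<in>Sim B1 B2. similarity B1 B2 h)"
    using assms(1) unfolding finite_sim_structure_def by (rule conjunct1)
  then show ?thesis using assms(2,3) by blast
qed

lemma Spairs_in_cls:
  assumes "finite_sim_structure X Sim" "(f, B) \<in> Spairs X Sim"
  shows "(f, B) \<in> cls X Sim f B"
proof -
  have "is_ball X B" using assms(2) unfolding Spairs_def by simp
  moreover have "\<forall>B. is_ball X B \<longrightarrow> restrict id B \<in> Sim B B"
    using assms(1) unfolding finite_sim_structure_def by (elim conjE)
  ultimately have "restrict id B \<in> Sim B B" by blast
  then show ?thesis
    using assms(2) unfolding cls_def pair_rel_def by (auto intro!: bexI[of _ "restrict id B"])
qed

lemma stabiliser_permutes_pieces: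
  assumes fss: "finite_sim_structure X Sim"
    and pieces: "\<And>i. i < k \<Longrightarrow> (fs i, Bs i) \<in> Spairs X Sim"
    and V: "V = {cls X Sim (fs i) (Bs i) | i. i < k}"
    and fixes_V: "vertex_act X Sim \<gamma> V = V"
    and i: "i < k"
  shows "\<exists>j<k. \<exists>h\<in>Sim (Bs i) (Bs j). \<forall>x\<in>Bs i. fs j (h x) = \<gamma> (fs i x)"
proof -
  have "(fs i, Bs i) \<in> cls X Sim (fs i) (Bs i)"
    using Spairs_in_cls[OF fss pieces[OF i]] .
  then have "cls X Sim (\<gamma> \<circ> fs i) (Bs i) \<in> vertex_act X Sim \<gamma> V"
    using i unfolding V vertex_act_def by blast
  then obtain j where j: "j < k"
    and same_class: "cls X Sim (\<gamma> \<circ> fs i) (Bs i) = cls X Sim (fs j) (Bs j)"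
    using fixes_V V by auto
  have "(fs j, Bs j) \<in> cls X Sim (\<gamma> \<circ> fs i) (Bs i)"
    using same_class Spairs_in_cls[OF fss pieces[OF j]] by simp
  then obtain h where "h \<in> Sim (Bs i) (Bs j)" "\<forall>x\<in>Bs i. fs j (h x) = \<gamma> (fs i x)"
    unfolding cls_def pair_rel_def by auto
  with j show ?thesis by blast
qed

lemma finite_stabiliser_of_pieces:
  fixes k :: nat
  assumes fss: "finite_sim_structure X Sim"
    and pieces: "\<And>i. i < k \<Longrightarrow> (fs i, Bs i) \<in> Spairs X Sim"
    and V: "V = {cls X Sim (fs i) (Bs i) | i. i < k}"
    and cover: "X = (\<Union>i<k. fs i ` Bs i)"
  shows "finite {\<gamma> \<in> GammaSim X Sim. vertex_act X Sim \<gamma> V = V}"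
    (is "finite ?Stab")
proof -
  define encodes where "encodes \<gamma> i p \<longleftrightarrow> (\<forall>x\<in>Bs i. fs (fst p) (snd p x) = \<gamma> (fs i x))"
    for \<gamma> i p
  have balls: "is_ball X (Bs i)" if "i < k" for i
    using pieces[OF that] unfolding Spairs_def by simp
  show ?thesis
  proof (rule finite_piecewise_determined[where I = "{..<k}" and A = "\<lambda>i. fs i ` Bs i"
        and S = "\<lambda>i. SIGMA j:{..<k}. Sim (Bs i) (Bs j)" and Q = encodes])
    show "?Stab \<subseteq> extensional X"
      unfolding GammaSim_def by blast
    show "finite (SIGMA j:{..<k}. Sim (Bs i) (Bs j))" if "i \<in> {..<k}" for i
    proof (rule finite_SigmaI)
      show "finite (Sim (Bs i) (Bs j))" if "j \<in> {..<k}" for j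
        using \<open>i \<in> {..<k}\<close> that by (simp add: finite_Sim[OF fss balls balls])
    qed simp
    show "\<exists>p\<in>SIGMA j:{..<k}. Sim (Bs i) (Bs j). encodes \<gamma> i p"
      if "\<gamma> \<in> ?Stab" "i \<in> {..<k}" for \<gamma> i
    proof -
      have fixes_V: "vertex_act X Sim \<gamma> V = V" and i: "i < k"
        using that by simp_all
      obtain j h where "j < k" "h \<in> Sim (Bs i) (Bs j)" "\<forall>x\<in>Bs i. fs j (h x) = \<gamma> (fs i x)"
        using stabiliser_permutes_pieces[OF fss pieces V fixes_V i] by blast
      then show ?thesis unfolding encodes_def by (intro bexI[of _ "(j, h)"]) auto
    qed
    show "\<gamma> y = \<gamma>' y" if "encodes \<gamma> i p" "encodes \<gamma>' i p" "y \<in> fs i ` Bs i"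
      for \<gamma> \<gamma>' i p y
      using that unfolding encodes_def by auto
  qed (use cover in simp_all)
qed

text \<open>Main result.\<close>
theorem lemma6p2:
  fixes X :: "'a::metric_space set"
    and Sim :: "'a set \<Rightarrow> 'a set \<Rightarrow> ('a \<Rightarrow> 'a) set"
    and V :: "(('a \<Rightarrow> 'a) \<times> 'a set) set set"
  assumes "X \<noteq> {}" and "compact X" and "ultrametric X"
    and fss: "finite_sim_structure X Sim"
    and "is_vertex X Sim V"
  shows "finite {\<gamma> \<in> GammaSim X Sim. vertex_act X Sim \<gamma> V = V}"
proof -
  obtain k :: nat and fs Bs where pieces: "\<forall>i<k. (fs i, Bs i) \<in> Spairs X Sim"
    and V: "V = {cls X Sim (fs i) (Bs i) | i. i < k}"
    and cover: "(\<Union>i<k. fs i ` Bs i) = X"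
    using \<open>is_vertex X Sim V\<close> unfolding is_vertex_def
  proof (elim exE conjE)
    fix k :: nat and fs Bs
    assume "\<forall>i<k. (fs i, Bs i) \<in> Spairs X Sim" "V = {cls X Sim (fs i) (Bs i) | i. i < k}"
      "(\<Union>i<k. fs i ` Bs i) = X"
    then show thesis by (rule that[of k fs Bs])
  qed
  show ?thesis
    using finite_stabiliser_of_pieces[OF fss pieces[rule_format] V cover[symmetric]] .
qed

end
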